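(* The Muchnik degrees of pandemic numberings and of hyperimmune sets coincide: for every oracle $X\subseteq\omega$, $X$ computes a pandemic numbering if and only if $X$ computes a hyperimmune set.
   Context: A numbering of the finite subsets of $\omega$ is a map $e\mapsto D_e$ from $\omega$ onto the finite subsets of $\omega$; an oracle $X$ computes such a numbering if the relation $\{(e,x): x\in D_e\}$ and the function $e\mapsto\max D_e$ (equivalently, $e\mapsto$ a canonical code of $D_e$) are $X$-computable. An order function is a recursive, nondecreasing, unbounded $h:\omega\to\omega$ with $h(0)\ge2$. For a numbering $D$ and $R\subseteq\omega$, $D$ is $h$-endemic to $R$ if there are infinitely many $e$ with $|D_e|\ge h(e)$ and $D_e\subseteq R$. $D$ is a pandemic numbering if there is an order function $h$ such that $D$ is $h$-endemic to every infinite recursive set $R$. A set $H\subseteq\omega$ is hyperimmune if it is infinite and the function enumerating its elements in increasing order is not dominated by any recursive function. *)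

theory Defs
  imports Main "HOL-Library.Infinite_Set"
begin

text \<open>Kleene's characterisation of total
  recursive functions (basic functions, composition, primitive recursion,
  regular minimisation), relativised by adding the characteristic function (of X)
  of X as an initial function.\<close>

inductive rec_in :: "nat set \<Rightarrow> nat \<Rightarrow> (nat list \<Rightarrow> nat) \<Rightarrow> bool" for X :: "nat set" where
  zero: "rec_in X n (\<lambda>_. 0)"
| succ: "rec_in X 1 (\<lambda>xs. Suc (hd xs))"
| proj: "i < n \<Longrightarrow> rec_in X n (\<lambda>xs. xs ! i)"
| char_X: "rec_in X 1 (\<lambda>xs. if hd xs \<in> X then 1 else 0)"
| comp: "rec_in X m g \<Longrightarrow> length fs = m \<Longrightarrow> (\<forall>i<m. rec_in X n (fs ! i))
          \<Longrightarrow> rec_in X n (\<lambda>xs. g (map (\<lambda>f. f xs) fs))"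
| prim_rec: "rec_in X n g \<Longrightarrow> rec_in X (n + 2) h
          \<Longrightarrow> rec_in X (n + 1) (\<lambda>xs. rec_nat (g (tl xs)) (\<lambda>y r. h (y # r # tl xs)) (hd xs))"
| mu: "rec_in X (n + 1) g \<Longrightarrow> (\<forall>xs. length xs = n \<longrightarrow> (\<exists>y. g (y # xs) = 0))
          \<Longrightarrow> rec_in X n (\<lambda>xs. LEAST y. g (y # xs) = 0)"
| ext: "rec_in X n f \<Longrightarrow> (\<forall>xs. length xs = n \<longrightarrow> f' xs = f xs) \<Longrightarrow> rec_in X n f'"

definition computable_in :: "nat set \<Rightarrow> (nat \<Rightarrow> nat) \<Rightarrow> bool" where
  "computable_in X f \<longleftrightarrow> rec_in X 1 (\<lambda>xs. f (hd xs))"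

definition computable_set_in :: "nat set \<Rightarrow> nat set \<Rightarrow> bool" where
  "computable_set_in X A \<longleftrightarrow> computable_in X (\<lambda>x. if x \<in> A then 1 else 0)"

definition computable_rel_in :: "nat set \<Rightarrow> (nat \<Rightarrow> nat \<Rightarrow> bool) \<Rightarrow> bool" where
  "computable_rel_in X P \<longleftrightarrow> rec_in X 2 (\<lambda>xs. if P (xs ! 0) (xs ! 1) then 1 else 0)"

definition recursive_fun :: "(nat \<Rightarrow> nat) \<Rightarrow> bool" where
  "recursive_fun f \<longleftrightarrow> computable_in {} f"

definition recursive_set :: "nat set \<Rightarrow> bool" where
  "recursive_set A \<longleftrightarrow> computable_set_in {} A"

definition numbering :: "(nat \<Rightarrow> nat set) \<Rightarrow> bool" where
  "numbering D \<longleftrightarrow> range D = {A. finite A}"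

definition canon :: "nat set \<Rightarrow> nat" where
  "canon A = (\<Sum>x\<in>A. 2 ^ x)"

definition computes_numbering :: "nat set \<Rightarrow> (nat \<Rightarrow> nat set) \<Rightarrow> bool" where
  "computes_numbering X D \<longleftrightarrow>
     computable_rel_in X (\<lambda>e x. x \<in> D e) \<and> computable_in X (\<lambda>e. canon (D e))"

definition order_function :: "(nat \<Rightarrow> nat) \<Rightarrow> bool" where
  "order_function h \<longleftrightarrow> recursive_fun h \<and> mono h \<and> (\<forall>k. \<exists>n. k < h n) \<and> 2 \<le> h 0"

definition endemic :: "(nat \<Rightarrow> nat) \<Rightarrow> (nat \<Rightarrow> nat set) \<Rightarrow> nat set \<Rightarrow> bool" where
  "endemic h D R \<longleftrightarrow> infinite {e. h e \<le> card (D e) \<and> D e \<subseteq> R}"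

definition pandemic :: "(nat \<Rightarrow> nat set) \<Rightarrow> bool" where
  "pandemic D \<longleftrightarrow> (\<exists>h. order_function h \<and>
     (\<forall>R. infinite R \<and> recursive_set R \<longrightarrow> endemic h D R))"

definition dominates :: "(nat \<Rightarrow> nat) \<Rightarrow> (nat \<Rightarrow> nat) \<Rightarrow> bool" where
  "dominates f g \<longleftrightarrow> (\<exists>N. \<forall>n\<ge>N. g n \<le> f n)"

definition hyperimmune :: "nat set \<Rightarrow> bool" where
  "hyperimmune H \<longleftrightarrow> infinite H \<and>
     \<not> (\<exists>f. recursive_fun f \<and> dominates f (enumerate H))"

end

theory Submission
  imports Defs "HOL-Library.Nat_Bijection"
begin

text \<open>
  (\<Leftarrow>) Let \<open>H\<close> be \<open>X\<close>-computable and hyperimmune, so its enumeration \<open>p\<^sub>H\<close> is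
  \<open>X\<close>-computable and escapes every recursive function. Put \<open>D\<^sub>2\<^sub>c\<close> = the set with canonical code \<open>c\<close>,
  and for \<open>e = 2\<langle>p, n\<rangle> + 1\<close> let \<open>D\<^sub>e\<close> be the first \<open>e + 2\<close> elements of the set decided by
  program \<open>p\<close>, provided a budgeted universal evaluator with budget \<open>p\<^sub>H(n)\<close> decides enough
  arguments, and \<open>\<emptyset>\<close> otherwise. For an infinite recursive \<open>R\<close> with program \<open>p\<close>, the budget needed
  to find the first \<open>2\<langle>p, n\<rangle> + 3\<close> elements of \<open>R\<close> is a recursive function of \<open>n\<close>; \<open>p\<^sub>H\<close>
  exceeds it infinitely often, and each such \<open>n\<close> yields an index \<open>e\<close> with \<open>D\<^sub>e \<subseteq> R\<close> and
  \<open>|D\<^sub>e| = e + 2\<close>. So \<open>D\<close> is pandemic for \<open>h(e) = e + 2\<close>.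

  (\<Rightarrow>) Let \<open>q(n)\<close> be the largest canonical code among \<open>D\<^sub>0, \<dots>, D\<^sub>n\<close>. Suppose a recursive
  \<open>f\<close>, which we may take monotone, dominated \<open>q\<close>. Build a recursive sequence \<open>a\<^sub>0 < a\<^sub>1 < \<dots>\<close> whose gap
  \<open>a\<^sub>k\<^sub>+\<^sub>1 - a\<^sub>k\<close> exceeds \<open>f(b\<^sub>k)\<close>, where \<open>b\<^sub>k\<close> is least with \<open>h(b\<^sub>k) > k + 2\<close>. If
  \<open>D\<^sub>e \<subseteq> range a\<close> has at least \<open>h(e) \<ge> 2\<close> elements and maximum \<open>a\<^sub>k\<^sub>+\<^sub>1\<close>, then \<open>h(e) \<le> k + 2\<close>, so
  \<open>e \<le> b\<^sub>k\<close> and, for large \<open>e\<close>, \<open>a\<^sub>k\<^sub>+\<^sub>1 < 2^a\<^sub>k\<^sub>+\<^sub>1 \<le> q(e) \<le> f(e) \<le> f(b\<^sub>k) < a\<^sub>k\<^sub>+\<^sub>1\<close>.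
  So \<open>D\<close> is not endemic to the recursive set \<open>range a\<close>. Hence no recursive function dominates
  \<open>q\<close>, and the range of the strictly increasing \<open>X\<close>-computable majorant \<open>n \<mapsto> q(n) + n\<close> of
  \<open>q\<close> is hyperimmune.

  The universal evaluator is obtained by coding programs for the generators of \<open>rec_in\<close> as
  numbers, certifying their computations by coded derivations, and observing that checking a
  coded derivation is itself recursive.
\<close>

section \<open>Closure properties of relative recursiveness\<close>

lemma rec_in_cong: "rec_in X n f \<Longrightarrow> (\<And>xs. length xs = n \<Longrightarrow> g xs = f xs) \<Longrightarrow> rec_in X n g"
  using rec_in.ext by blast

lemma rec_in_comp:
  assumes "rec_in X m g" "length fs = m" "\<And>i. i < m \<Longrightarrow> rec_in X n (fs ! i)"
  shows "rec_in X n (\<lambda>xs. g (map (\<lambda>f. f xs) fs))"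
  using rec_in.comp assms by blast

lemma rec_in_comp1:
  assumes g: "rec_in X 1 (\<lambda>xs. g (xs!0))" and a: "rec_in X n a"
  shows "rec_in X n (\<lambda>xs. g (a xs))"
  using rec_in_comp[OF g, of "[a]"] a by simp

lemma rec_in_comp2:
  assumes g: "rec_in X 2 (\<lambda>xs. g (xs!0) (xs!1))" and a: "rec_in X n a" and b: "rec_in X n b"
  shows "rec_in X n (\<lambda>xs. g (a xs) (b xs))"
proof -
  have "rec_in X n (\<lambda>xs. (\<lambda>ys. g (ys!0) (ys!1)) (map (\<lambda>f. f xs) [a, b]))"
    by (rule rec_in_comp[OF g]) (use a b in \<open>auto simp: less_Suc_eq numeral_2_eq_2\<close>)
  then show ?thesis by simp
qed

lemma rec_in_proj_drop: "k + i < n \<Longrightarrow> rec_in X n (\<lambda>xs. drop k xs ! i)"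
  by (rule rec_in_cong[OF rec_in.proj[of "k + i"]]) auto

lemma hd_eq_nth0: "length xs = Suc 0 \<Longrightarrow> hd xs = xs!0"
  by (cases xs) auto

lemma computable_in_iff: "computable_in X f \<longleftrightarrow> rec_in X 1 (\<lambda>xs. f (xs!0))"
  unfolding computable_in_def by (auto elim!: rec_in_cong simp: hd_eq_nth0)

lemma rec_in_computable: "computable_in X f \<Longrightarrow> rec_in X n a \<Longrightarrow> rec_in X n (\<lambda>xs. f (a xs))"
  unfolding computable_in_iff by (rule rec_in_comp1)

lemma rec_in_Suc: "rec_in X n a \<Longrightarrow> rec_in X n (\<lambda>xs. Suc (a xs))"
  by (rule rec_in_comp1[OF rec_in_cong[OF rec_in.succ]]) (auto simp: hd_eq_nth0)

lemma rec_in_const: "rec_in X n (\<lambda>xs. c)"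
  by (induction c) (auto intro: rec_in.zero rec_in_Suc)

lemma rec_in_rec_nat:
  assumes c: "rec_in X n c" and a: "rec_in X n a"
    and s: "rec_in X (Suc (Suc n)) (\<lambda>ys. s (ys!0) (ys!1) (drop 2 ys))"
  shows "rec_in X n (\<lambda>xs. rec_nat (a xs) (\<lambda>y r. s y r xs) (c xs))"
proof -
  have "rec_in X (n + 2) (\<lambda>ys. s (ys!0) (ys!1) (drop 2 ys))"
    using s by simp
  from rec_in.prim_rec[OF a this]
  have "rec_in X (n + 1) (\<lambda>zs. rec_nat (a (tl zs)) (\<lambda>y r. s y r (tl zs)) (hd zs))"
    by simp
  then have "rec_in X n (\<lambda>xs. (\<lambda>zs. rec_nat (a (tl zs)) (\<lambda>y r. s y r (tl zs)) (hd zs))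
      (map (\<lambda>f. f xs) (c # map (\<lambda>i xs. xs ! i) [0..<n])))"
    by (rule rec_in_comp) (use c in \<open>auto simp: nth_Cons' intro: rec_in.proj\<close>)
  then show ?thesis
    by (rule rec_in_cong) (simp add: o_def, metis map_nth)
qed

lemma rec_in_add: "rec_in X n a \<Longrightarrow> rec_in X n b \<Longrightarrow> rec_in X n (\<lambda>xs. a xs + b xs)"
proof -
  have "rec_in X 2 (\<lambda>xs. rec_nat (xs!1) (\<lambda>y r. Suc r) (xs!0))"
    by (rule rec_in_rec_nat[where s="\<lambda>y r xs. Suc r"]) (auto intro!: rec_in.proj rec_in_Suc)
  moreover have "rec_nat b (\<lambda>y r. Suc r) a = a + b" for a b :: nat
    by (induction a) auto
  ultimately have "rec_in X 2 (\<lambda>xs. xs!0 + xs!1)"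
    by simp
  then show "rec_in X n a \<Longrightarrow> rec_in X n b \<Longrightarrow> rec_in X n (\<lambda>xs. a xs + b xs)"
    by (rule rec_in_comp2)
qed

lemma rec_in_minus1: "rec_in X n a \<Longrightarrow> rec_in X n (\<lambda>xs. a xs - 1)"
proof -
  have "rec_in X 1 (\<lambda>xs. rec_nat 0 (\<lambda>y r. y) (xs!0))"
    by (rule rec_in_rec_nat[where s="\<lambda>y r xs. y"]) (auto intro!: rec_in.proj rec_in_const)
  moreover have "rec_nat 0 (\<lambda>y r. y) a = a - 1" for a :: nat
    by (cases a) auto
  ultimately have "rec_in X 1 (\<lambda>xs. xs!0 - 1)"
    by simp
  then show "rec_in X n a \<Longrightarrow> rec_in X n (\<lambda>xs. a xs - 1)"
    by (rule rec_in_comp1)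
qed

lemma rec_in_diff: "rec_in X n a \<Longrightarrow> rec_in X n b \<Longrightarrow> rec_in X n (\<lambda>xs. a xs - b xs)"
proof -
  have "rec_in X 2 (\<lambda>xs. rec_nat (xs!0) (\<lambda>y r. r - 1) (xs!1))"
    by (rule rec_in_rec_nat[where s="\<lambda>y r xs. r - 1"]) (intro rec_in_minus1 rec_in.proj; simp)+
  moreover have "rec_nat a (\<lambda>y r. r - 1) b = a - b" for a b :: nat
    by (induction b) auto
  ultimately have "rec_in X 2 (\<lambda>xs. xs!0 - xs!1)"
    by simp
  then show "rec_in X n a \<Longrightarrow> rec_in X n b \<Longrightarrow> rec_in X n (\<lambda>xs. a xs - b xs)"
    by (rule rec_in_comp2)
qed

lemma rec_in_mult: "rec_in X n a \<Longrightarrow> rec_in X n b \<Longrightarrow> rec_in X n (\<lambda>xs. a xs * b xs)"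
proof -
  have "rec_in X 2 (\<lambda>xs. rec_nat 0 (\<lambda>y r. r + xs!1) (xs!0))"
    by (rule rec_in_rec_nat[where s="\<lambda>y r xs. r + xs!1"])
      (auto intro!: rec_in.proj rec_in_add rec_in_const rec_in_proj_drop)
  moreover have "rec_nat 0 (\<lambda>y r. r + b) a = a * b" for a b :: nat
    by (induction a) auto
  ultimately have "rec_in X 2 (\<lambda>xs. xs!0 * xs!1)"
    by simp
  then show "rec_in X n a \<Longrightarrow> rec_in X n b \<Longrightarrow> rec_in X n (\<lambda>xs. a xs * b xs)"
    by (rule rec_in_comp2)
qed

definition rec_pred :: "nat set \<Rightarrow> nat \<Rightarrow> (nat list \<Rightarrow> bool) \<Rightarrow> bool" where
  "rec_pred X n P \<longleftrightarrow> rec_in X n (\<lambda>xs. if P xs then 1 else 0)"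

lemma rec_pred_cong: "rec_pred X n P \<Longrightarrow> (\<And>xs. length xs = n \<Longrightarrow> Q xs = P xs) \<Longrightarrow> rec_pred X n Q"
  unfolding rec_pred_def by (erule rec_in_cong) simp

lemma rec_in_if: "rec_pred X n P \<Longrightarrow> rec_in X n a \<Longrightarrow> rec_in X n b \<Longrightarrow>
   rec_in X n (\<lambda>xs. if P xs then a xs else b xs)"
  unfolding rec_pred_def
  by (rule rec_in_cong[where f="\<lambda>xs. (if P xs then 1 else 0) * a xs + (1 - (if P xs then 1 else 0)) * b xs"])
    (auto intro!: rec_in_add rec_in_mult rec_in_diff rec_in_const)

lemma rec_pred_const: "rec_pred X n (\<lambda>xs. c)"
  unfolding rec_pred_def by (rule rec_in_const)

lemma rec_pred_eq: "rec_in X n a \<Longrightarrow> rec_in X n b \<Longrightarrow> rec_pred X n (\<lambda>xs. a xs = b xs)"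
  unfolding rec_pred_def
  by (rule rec_in_cong[where f="\<lambda>xs. 1 - ((a xs - b xs) + (b xs - a xs))"])
    (auto intro!: rec_in_add rec_in_diff rec_in_const)

lemma rec_pred_less: "rec_in X n a \<Longrightarrow> rec_in X n b \<Longrightarrow> rec_pred X n (\<lambda>xs. a xs < b xs)"
  unfolding rec_pred_def
  by (rule rec_in_cong[where f="\<lambda>xs. 1 - (1 - (b xs - a xs))"])
    (auto intro!: rec_in_diff rec_in_const)

lemma rec_pred_le: "rec_in X n a \<Longrightarrow> rec_in X n b \<Longrightarrow> rec_pred X n (\<lambda>xs. a xs \<le> b xs)"
  unfolding rec_pred_def
  by (rule rec_in_cong[where f="\<lambda>xs. 1 - (1 - (Suc (b xs) - a xs))"])
    (auto intro!: rec_in_diff rec_in_const rec_in_Suc)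

lemma rec_pred_not: "rec_pred X n P \<Longrightarrow> rec_pred X n (\<lambda>xs. \<not> P xs)"
  unfolding rec_pred_def
  by (rule rec_in_cong[where f="\<lambda>xs. 1 - (if P xs then 1 else 0)"])
    (auto intro!: rec_in_diff rec_in_const)

lemma rec_pred_conj: "rec_pred X n P \<Longrightarrow> rec_pred X n Q \<Longrightarrow> rec_pred X n (\<lambda>xs. P xs \<and> Q xs)"
  unfolding rec_pred_def
  by (rule rec_in_cong[where f="\<lambda>xs. (if P xs then 1 else 0) * (if Q xs then 1 else 0)"])
    (auto intro!: rec_in_mult)

lemma rec_pred_disj: "rec_pred X n P \<Longrightarrow> rec_pred X n Q \<Longrightarrow> rec_pred X n (\<lambda>xs. P xs \<or> Q xs)"
  by (rule rec_pred_cong[OF rec_pred_not[OF rec_pred_conj[OF rec_pred_not rec_pred_not]]]) auto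

lemma rec_pred_imp: "rec_pred X n P \<Longrightarrow> rec_pred X n Q \<Longrightarrow> rec_pred X n (\<lambda>xs. P xs \<longrightarrow> Q xs)"
  by (rule rec_pred_cong[OF rec_pred_disj[OF rec_pred_not]]) auto

lemma rec_pred_computable_set:
  "computable_set_in X A \<Longrightarrow> rec_in X n a \<Longrightarrow> rec_pred X n (\<lambda>xs. a xs \<in> A)"
  unfolding computable_set_in_def rec_pred_def by (drule rec_in_computable) auto

lemma map_nth_upt_drop: "k \<le> length xs \<Longrightarrow> map (\<lambda>i. xs!i) [k..<length xs] = drop k xs"
  by (rule nth_equalityI) auto

lemma rec_in_rearrange:
  assumes g: "rec_in X m g" and l: "length idx = m" and b: "\<forall>j\<in>set idx. j < n"
  shows "rec_in X n (\<lambda>xs. g (map (\<lambda>i. xs!i) idx))"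
proof -
  have "rec_in X n (\<lambda>xs. g (map (\<lambda>f. f xs) (map (\<lambda>i xs. xs!i) idx)))"
    by (rule rec_in_comp[OF g]) (use l b in \<open>auto intro!: rec_in.proj\<close>)
  then show ?thesis by (simp add: o_def)
qed

lemma rec_in_drop2: "rec_in X n f \<Longrightarrow> rec_in X (Suc (Suc n)) (\<lambda>ys. f (drop 2 ys))"
  by (rule rec_in_cong[OF rec_in_rearrange[of X n f "[2..<Suc (Suc n)]"]])
    (auto simp flip: map_nth_upt_drop simp del: upt_Suc)

lemma rec_in_skip_arg1:
  assumes "rec_in X (Suc n) (\<lambda>ys. f (ys!0) (drop 1 ys))"
  shows "rec_in X (Suc (Suc n)) (\<lambda>ys. f (ys!0) (drop 2 ys))"
  by (rule rec_in_cong[OF rec_in_rearrange[OF assms, of "0 # [2..<Suc (Suc n)]"]])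
    (auto simp flip: map_nth_upt_drop simp del: upt_Suc)

lemma rec_in_sum:
  assumes f: "rec_in X (Suc n) (\<lambda>ys. f (ys!0) (drop 1 ys))" and B: "rec_in X n B"
  shows "rec_in X n (\<lambda>xs. \<Sum>i<B xs. f i xs)"
proof -
  have "rec_in X n (\<lambda>xs. rec_nat 0 (\<lambda>y r. r + f y xs) (B xs))"
    by (rule rec_in_rec_nat[where s="\<lambda>y r xs. r + f y xs", OF B rec_in_const])
      (rule rec_in_add[OF rec_in.proj rec_in_skip_arg1[OF f]], simp)
  moreover have "rec_nat 0 (\<lambda>y r. r + f y xs) b = (\<Sum>i<b. f i xs)" for b xs
    by (induction b) auto
  ultimately show ?thesis by simp
qed

lemma rec_pred_ball:
  assumes P: "rec_pred X (Suc n) (\<lambda>ys. P (ys!0) (drop 1 ys))" and B: "rec_in X n B"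
  shows "rec_pred X n (\<lambda>xs. \<forall>i<B xs. P i xs)"
proof -
  have "rec_in X n (\<lambda>xs. \<Sum>i<B xs. if \<not> P i xs then 1 else 0)"
    using rec_pred_not[OF P] unfolding rec_pred_def by (rule rec_in_sum[OF _ B])
  then have "rec_pred X n (\<lambda>xs. (\<Sum>i<B xs. if \<not> P i xs then 1 else 0) = (0::nat))"
    using rec_pred_eq[OF _ rec_in_const] by blast
  then show ?thesis by (rule rec_pred_cong) auto
qed

lemma rec_pred_bex:
  assumes P: "rec_pred X (Suc n) (\<lambda>ys. P (ys!0) (drop 1 ys))" and B: "rec_in X n B"
  shows "rec_pred X n (\<lambda>xs. \<exists>i<B xs. P i xs)"
  by (rule rec_pred_cong[OF rec_pred_not[OF rec_pred_ball[OF rec_pred_not[OF P] B]]]) auto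

lemma rec_in_Least:
  assumes P: "rec_pred X (Suc n) (\<lambda>ys. P (ys!0) (drop 1 ys))"
    and ex: "\<And>xs. length xs = n \<Longrightarrow> \<exists>y. P y xs"
  shows "rec_in X n (\<lambda>xs. LEAST y. P y xs)"
proof -
  have g: "rec_in X (n + 1) (\<lambda>ys. 1 - (if P (ys!0) (drop 1 ys) then 1 else 0))"
    using P unfolding rec_pred_def by (auto intro!: rec_in_diff rec_in_const)
  have "\<forall>xs. length xs = n \<longrightarrow> (\<exists>y. 1 - (if P ((y # xs)!0) (drop 1 (y # xs)) then 1 else 0) = (0::nat))"
    using ex by fastforce
  from rec_in.mu[OF g this] show ?thesis
    by (rule rec_in_cong) simp
qed

lemmas rec_intros = rec_in_add rec_in_diff rec_in_mult rec_in_Suc rec_in_minus1 rec_in_if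
  rec_in_sum rec_in_Least rec_pred_eq rec_pred_less rec_pred_le rec_pred_not rec_pred_conj
  rec_pred_disj rec_pred_imp rec_pred_ball rec_pred_bex rec_in.proj rec_in_proj_drop rec_in_const
  rec_pred_const

lemma rec_in_max: "rec_in X n a \<Longrightarrow> rec_in X n b \<Longrightarrow> rec_in X n (\<lambda>xs. max (a xs) (b xs))"
  unfolding max_def by (intro rec_intros; assumption)

lemma rec_in_power2: "rec_in X n a \<Longrightarrow> rec_in X n (\<lambda>xs. 2 ^ a xs)"
proof -
  assume a: "rec_in X n a"
  have "rec_in X n (\<lambda>xs. rec_nat 1 (\<lambda>y r. r * 2) (a xs))"
    by (rule rec_in_rec_nat[OF a]) (intro rec_intros | simp only: drop_drop)+
  moreover have "rec_nat 1 (\<lambda>y r. r * 2) k = (2::nat) ^ k" for k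
    by (induction k) auto
  ultimately show ?thesis by simp
qed

lemma div_eq_Least: "(b::nat) > 0 \<Longrightarrow> a div b = (LEAST q. a < b * Suc q)"
proof (rule Least_equality[symmetric])
  assume b: "b > 0"
  show "a < b * Suc (a div b)"
    using div_less_iff_less_mult[OF b, of a "Suc (a div b)"] by (simp add: mult.commute)
  show "a < b * Suc q \<Longrightarrow> a div b \<le> q" for q
    using div_less_iff_less_mult[OF b, of a "Suc q"] by (simp add: mult.commute)
qed

lemma rec_in_div: "rec_in X n a \<Longrightarrow> rec_in X n b \<Longrightarrow> rec_in X n (\<lambda>xs. a xs div b xs)"
proof -
  txt \<open>The disjunct \<open>y = 0\<close> only makes the search total; the result \<open>0\<close> agrees with \<open>x div 0\<close>.\<close>
  have "\<exists>q. y = 0 \<or> x < y * Suc q" for x y :: nat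
    by (rule exI[of _ x]) (cases y, auto)
  then have "rec_in X 2 (\<lambda>xs. if xs!1 = 0 then 0 else LEAST q. xs!1 = 0 \<or> xs!0 < xs!1 * Suc q)"
    by (intro rec_intros | simp only: drop_drop)+
  moreover have "(if y = 0 then 0 else LEAST q. y = 0 \<or> x < y * Suc q) = x div y" for x y :: nat
    using div_eq_Least[of y x] by auto
  ultimately have "rec_in X 2 (\<lambda>xs. xs!0 div xs!1)"
    by (simp only:)
  then show "rec_in X n a \<Longrightarrow> rec_in X n b \<Longrightarrow> rec_in X n (\<lambda>xs. a xs div b xs)"
    by (rule rec_in_comp2)
qed

lemma rec_in_mod: "rec_in X n a \<Longrightarrow> rec_in X n b \<Longrightarrow> rec_in X n (\<lambda>xs. a xs mod b xs)"
  unfolding minus_mult_div_eq_mod[symmetric] by (intro rec_in_diff rec_in_mult rec_in_div)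

section \<open>Recursive coding of pairs and lists\<close>

definition npair :: "nat \<Rightarrow> nat \<Rightarrow> nat" where "npair a b = prod_encode (a, b)"
definition nfst :: "nat \<Rightarrow> nat" where "nfst z = fst (prod_decode z)"
definition nsnd :: "nat \<Rightarrow> nat" where "nsnd z = snd (prod_decode z)"

lemma nfst_npair [simp]: "nfst (npair a b) = a" and nsnd_npair [simp]: "nsnd (npair a b) = b"
  by (auto simp: nfst_def nsnd_def npair_def)

lemma npair_nfst_nsnd: "npair (nfst z) (nsnd z) = z"
  by (simp add: npair_def nfst_def nsnd_def)

lemma nfst_le: "nfst z \<le> z"
  by (metis le_prod_encode_1 npair_def npair_nfst_nsnd)

lemma nsnd_le: "nsnd z \<le> z"
  by (metis le_prod_encode_2 npair_def npair_nfst_nsnd)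

lemma rec_in_triangle: "rec_in X n a \<Longrightarrow> rec_in X n (\<lambda>xs. triangle (a xs))"
proof -
  assume a: "rec_in X n a"
  have "rec_in X n (\<lambda>xs. rec_nat 0 (\<lambda>y r. r + Suc y) (a xs))"
    by (rule rec_in_rec_nat[OF a]) (intro rec_intros | simp only: drop_drop)+
  moreover have "rec_nat 0 (\<lambda>y r. r + Suc y) m = triangle m" for m
    by (induction m) auto
  ultimately show ?thesis by simp
qed

lemma rec_in_npair: "rec_in X n a \<Longrightarrow> rec_in X n b \<Longrightarrow> rec_in X n (\<lambda>xs. npair (a xs) (b xs))"
  unfolding npair_def prod_encode_def by (auto intro!: rec_in_add rec_in_triangle)

text \<open>Bounded search inverts the pairing, as both components are bounded by the code.\<close>

lemma nfst_eq_Least: "nfst z = (LEAST a. \<exists>b<Suc z. npair a b = z)"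
  by (rule Least_equality[symmetric]) (use nsnd_le npair_nfst_nsnd in \<open>auto simp: less_Suc_eq_le\<close>)

lemma nsnd_eq_Least: "nsnd z = (LEAST b. \<exists>a<Suc z. npair a b = z)"
  by (rule Least_equality[symmetric]) (use nfst_le npair_nfst_nsnd in \<open>auto simp: less_Suc_eq_le\<close>)

lemma rec_in_nfst: "rec_in X n a \<Longrightarrow> rec_in X n (\<lambda>xs. nfst (a xs))"
proof (rule rec_in_comp1[where g=nfst])
  show "rec_in X 1 (\<lambda>xs. nfst (xs!0))"
    unfolding nfst_eq_Least
    by (rule rec_in_Least) ((intro rec_intros rec_in_npair | simp only: drop_drop)+,
      use nsnd_le npair_nfst_nsnd in \<open>auto simp: less_Suc_eq_le\<close>)
qed

lemma rec_in_nsnd: "rec_in X n a \<Longrightarrow> rec_in X n (\<lambda>xs. nsnd (a xs))"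
proof (rule rec_in_comp1[where g=nsnd])
  show "rec_in X 1 (\<lambda>xs. nsnd (xs!0))"
    unfolding nsnd_eq_Least
    by (rule rec_in_Least) ((intro rec_intros rec_in_npair | simp only: drop_drop)+,
      use nfst_le npair_nfst_nsnd in \<open>auto simp: less_Suc_eq_le\<close>)
qed

text \<open>
  List codes are those of \<open>list_encode\<close>; the destructors are total, with
  \<open>nhd 0 = ntl 0 = 0\<close> on the code of the empty list.
\<close>

definition ncons :: "nat \<Rightarrow> nat \<Rightarrow> nat" where "ncons x c = Suc (npair x c)"
definition nhd :: "nat \<Rightarrow> nat" where "nhd c = nfst (c - 1)"
definition ntl :: "nat \<Rightarrow> nat" where "ntl c = nsnd (c - 1)"
definition nnth :: "nat \<Rightarrow> nat \<Rightarrow> nat" where "nnth c i = nhd ((ntl ^^ i) c)"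
definition nlen :: "nat \<Rightarrow> nat" where "nlen c = (LEAST i. (ntl ^^ i) c = 0)"

lemma list_encode_Cons: "list_encode (x # xs) = ncons x (list_encode xs)"
  by (simp add: ncons_def npair_def)

lemma ntl_0 [simp]: "ntl 0 = 0"
  using nsnd_le[of 0] by (simp add: ntl_def)

lemma nhd_ncons [simp]: "nhd (ncons x c) = x" by (simp add: nhd_def ncons_def)
lemma ntl_ncons [simp]: "ntl (ncons x c) = c" by (simp add: ntl_def ncons_def)

lemma nnth_ncons_0 [simp]: "nnth (ncons x c) 0 = x"
  by (simp add: nnth_def)

lemma nnth_ncons_Suc [simp]: "nnth (ncons x c) (Suc i) = nnth c i"
  by (simp add: nnth_def funpow_swap1)

lemma ntl_funpow_list_encode: "(ntl ^^ i) (list_encode xs) = list_encode (drop i xs)"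
proof (induction i arbitrary: xs)
  case (Suc i)
  then show ?case
    using Suc[of "[]"] by (cases xs) (simp_all add: funpow_swap1 list_encode_Cons del: list_encode.simps(2))
qed simp

lemma nnth_list_encode: "i < length xs \<Longrightarrow> nnth (list_encode xs) i = xs ! i"
  by (simp add: nnth_def ntl_funpow_list_encode Cons_nth_drop_Suc[symmetric] list_encode_Cons
      del: list_encode.simps)

lemma nnth_list_encode_Cons_0 [simp]: "nnth (list_encode (x # xs)) 0 = x"
  by (simp add: list_encode_Cons del: list_encode.simps)

lemma nnth_list_encode_Cons_Suc [simp]: "nnth (list_encode (x # xs)) (Suc i) = nnth (list_encode xs) i"
  by (simp add: list_encode_Cons del: list_encode.simps)

lemma nnth_list_encode_Cons_numeral [simp]:
  "nnth (list_encode (x # xs)) (numeral k) = nnth (list_encode xs) (pred_numeral k)"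
  by (simp add: numeral_eq_Suc del: list_encode.simps)

lemma ntl_list_encode_Cons [simp]: "ntl (list_encode (x # xs)) = list_encode xs"
  by (simp add: list_encode_Cons del: list_encode.simps)

declare list_encode.simps(2) [simp del]

lemma list_encode_eq_0_iff: "list_encode xs = 0 \<longleftrightarrow> xs = []"
  by (cases xs) (simp_all add: list_encode.simps)

lemma nlen_list_encode [simp]: "nlen (list_encode xs) = length xs"
  unfolding nlen_def ntl_funpow_list_encode list_encode_eq_0_iff
  by (rule Least_equality) auto

lemma ntl_less: "c \<noteq> 0 \<Longrightarrow> ntl c < c"
  using nsnd_le[of "c - 1"] by (simp add: ntl_def)

lemma ntl_funpow_self: "(ntl ^^ c) c = 0"
proof -
  have "(ntl ^^ i) c \<le> c - i" for i
  proof (induction i)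
    case (Suc i)
    show ?case
    proof (cases "(ntl ^^ i) c = 0")
      case False
      then have "ntl ((ntl ^^ i) c) < (ntl ^^ i) c"
        by (rule ntl_less)
      with Suc show ?thesis
        by simp
    qed simp
  qed simp
  then show ?thesis
    by (metis diff_self_eq_0 le_zero_eq)
qed

lemma rec_in_ncons: "rec_in X n a \<Longrightarrow> rec_in X n b \<Longrightarrow> rec_in X n (\<lambda>xs. ncons (a xs) (b xs))"
  unfolding ncons_def by (intro rec_in_Suc rec_in_npair)

lemma rec_in_nhd: "rec_in X n a \<Longrightarrow> rec_in X n (\<lambda>xs. nhd (a xs))"
  unfolding nhd_def by (intro rec_in_nfst rec_in_minus1)

lemma rec_in_ntl: "rec_in X n a \<Longrightarrow> rec_in X n (\<lambda>xs. ntl (a xs))"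
  unfolding ntl_def by (intro rec_in_nsnd rec_in_minus1)

lemma funpow_eq_rec_nat: "(f ^^ i) c = rec_nat c (\<lambda>y r. f r) i"
  by (induction i) auto

lemma rec_in_ntl_funpow:
  "rec_in X n a \<Longrightarrow> rec_in X n b \<Longrightarrow> rec_in X n (\<lambda>xs. (ntl ^^ (b xs)) (a xs))"
  unfolding funpow_eq_rec_nat
  by (rule rec_in_rec_nat, assumption, assumption) (intro rec_in_ntl rec_in.proj, simp)

lemma rec_in_nnth: "rec_in X n a \<Longrightarrow> rec_in X n b \<Longrightarrow> rec_in X n (\<lambda>xs. nnth (a xs) (b xs))"
  unfolding nnth_def by (intro rec_in_nhd rec_in_ntl_funpow)

lemma rec_in_nlen: "rec_in X n a \<Longrightarrow> rec_in X n (\<lambda>xs. nlen (a xs))"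
proof (rule rec_in_comp1[where g=nlen])
  show "rec_in X 1 (\<lambda>xs. nlen (xs!0))"
    unfolding nlen_def
    by (rule rec_in_Least) ((intro rec_intros rec_in_ntl_funpow | simp only: drop_drop)+,
      use ntl_funpow_self in blast)
qed

lemmas code_intros = rec_in_npair rec_in_nfst rec_in_nsnd rec_in_ncons rec_in_nhd rec_in_ntl
  rec_in_nnth rec_in_nlen

lemma ncode_eqI: "nlen x = nlen x' \<Longrightarrow> (\<And>j. j < nlen x \<Longrightarrow> nnth x j = nnth x' j) \<Longrightarrow> x = x'"
  by (metis list_decode_inverse nlen_list_encode nnth_list_encode nth_equalityI)

section \<open>Programs and their computations\<close>

text \<open>
  A program is a list code \<open>[t, p\<^sub>1, p\<^sub>2]\<close>: \<open>t = 0\<close> is zero, \<open>1\<close> successor, \<open>2\<close> projection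
  to component \<open>p\<^sub>1\<close>, \<open>3\<close> composition of \<open>p\<^sub>1\<close> with the list code \<open>p\<^sub>2\<close> of programs,
  \<open>4\<close> primitive recursion with base \<open>p\<^sub>1\<close> and step \<open>p\<^sub>2\<close>, and \<open>5\<close> minimisation of \<open>p\<^sub>1\<close>.
  Arguments are list codes, and \<open>x\<close> codes the list of intermediate values in cases \<open>3\<close> and \<open>4\<close>.
  \<open>R p a y\<close> states that \<open>p\<close> computes \<open>y\<close> on \<open>a\<close>, and \<open>NZ p a\<close> that it computes a nonzero
  value; the latter is a separate parameter so that it can be decided by bounded search
  in a coded derivation below.
\<close>

definition step_ok ::
  "(nat \<Rightarrow> nat \<Rightarrow> nat \<Rightarrow> bool) \<Rightarrow> (nat \<Rightarrow> nat \<Rightarrow> bool) \<Rightarrow> nat \<Rightarrow> nat \<Rightarrow> nat \<Rightarrow> nat \<Rightarrow> bool"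
where
  "step_ok R NZ p a y x \<longleftrightarrow>
    (nnth p 0 = 0 \<and> y = 0) \<or>
    (nnth p 0 = 1 \<and> y = Suc (nnth a 0)) \<or>
    (nnth p 0 = 2 \<and> y = nnth a (nnth p 1)) \<or>
    (nnth p 0 = 3 \<and> nlen x = nlen (nnth p 2) \<and>
       (\<forall>j<nlen (nnth p 2). R (nnth (nnth p 2) j) a (nnth x j)) \<and> R (nnth p 1) x y) \<or>
    (nnth p 0 = 4 \<and> nlen x = Suc (nnth a 0) \<and> R (nnth p 1) (ntl a) (nnth x 0) \<and>
       (\<forall>j<nnth a 0. R (nnth p 2) (ncons j (ncons (nnth x j) (ntl a))) (nnth x (Suc j))) \<and>
       y = nnth x (nnth a 0)) \<or>
    (nnth p 0 = 5 \<and> R (nnth p 1) (ncons y a) 0 \<and> (\<forall>j<y. NZ (nnth p 1) (ncons j a)))"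

definition nonzero_val :: "(nat \<Rightarrow> nat \<Rightarrow> nat \<Rightarrow> bool) \<Rightarrow> nat \<Rightarrow> nat \<Rightarrow> bool" where
  "nonzero_val R p a \<longleftrightarrow> (\<exists>v. v \<noteq> 0 \<and> R p a v)"

lemma step_ok_comp_iff:
  "nnth p 0 = 3 \<Longrightarrow> step_ok R NZ p a y x \<longleftrightarrow> nlen x = nlen (nnth p 2) \<and>
    (\<forall>j<nlen (nnth p 2). R (nnth (nnth p 2) j) a (nnth x j)) \<and> R (nnth p 1) x y"
  by (simp add: step_ok_def)

lemma step_ok_rec_iff:
  "nnth p 0 = 4 \<Longrightarrow> step_ok R NZ p a y x \<longleftrightarrow> nlen x = Suc (nnth a 0) \<and>
    R (nnth p 1) (ntl a) (nnth x 0) \<and>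
    (\<forall>j<nnth a 0. R (nnth p 2) (ncons j (ncons (nnth x j) (ntl a))) (nnth x (Suc j))) \<and>
    y = nnth x (nnth a 0)"
  by (simp add: step_ok_def)

lemma step_ok_min_iff:
  "nnth p 0 = 5 \<Longrightarrow> step_ok R NZ p a y x \<longleftrightarrow>
    R (nnth p 1) (ncons y a) 0 \<and> (\<forall>j<y. NZ (nnth p 1) (ncons j a))"
  by (simp add: step_ok_def)

lemma step_ok_basic_iff:
  "nnth p 0 \<notin> {3, 4, 5} \<Longrightarrow> step_ok R NZ p a y x \<longleftrightarrow> step_ok R' NZ' p a y x"
  by (simp add: step_ok_def)

lemma step_ok_mono:
  "step_ok R NZ p a y x \<Longrightarrow> (\<And>p a y. R p a y \<Longrightarrow> R' p a y) \<Longrightarrow> (\<And>p a. NZ p a \<Longrightarrow> NZ' p a)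
    \<Longrightarrow> step_ok R' NZ' p a y x"
  unfolding step_ok_def by blast

lemma step_ok_nonzero_val_mono [mono]:
  "R \<le> S \<Longrightarrow> step_ok R (nonzero_val R) p a y x \<longrightarrow> step_ok S (nonzero_val S) p a y x"
  by (intro impI, erule step_ok_mono) (auto simp: nonzero_val_def le_fun_def)

inductive computes :: "nat \<Rightarrow> nat \<Rightarrow> nat \<Rightarrow> bool" where
  step: "step_ok computes (nonzero_val computes) p a y x \<Longrightarrow> computes p a y"

lemma step_ok_det_comp:
  assumes "nnth p 0 = 3" "step_ok R NZ p a y x" "step_ok S NZ' p a y' x'"
    and det: "\<And>p a z z'. R p a z \<Longrightarrow> S p a z' \<Longrightarrow> z = z'"
  shows "y = y'"
proof -
  from assms(1,2) have A: "nlen x = nlen (nnth p 2)"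
    "\<forall>j<nlen (nnth p 2). R (nnth (nnth p 2) j) a (nnth x j)" "R (nnth p 1) x y"
    by (simp_all add: step_ok_comp_iff)
  from assms(1,3) have B: "nlen x' = nlen (nnth p 2)"
    "\<forall>j<nlen (nnth p 2). S (nnth (nnth p 2) j) a (nnth x' j)" "S (nnth p 1) x' y'"
    by (simp_all add: step_ok_comp_iff)
  have "x = x'"
    by (rule ncode_eqI) (use A B det in auto)
  with A(3) B(3) show ?thesis
    by (blast intro: det)
qed

lemma step_ok_det_rec:
  assumes "nnth p 0 = 4" "step_ok R NZ p a y x" "step_ok S NZ' p a y' x'"
    and det: "\<And>p a z z'. R p a z \<Longrightarrow> S p a z' \<Longrightarrow> z = z'"
  shows "y = y'"
proof -
  from assms(1,2) have A: "R (nnth p 1) (ntl a) (nnth x 0)"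
    "\<forall>j<nnth a 0. R (nnth p 2) (ncons j (ncons (nnth x j) (ntl a))) (nnth x (Suc j))"
    "y = nnth x (nnth a 0)"
    by (simp_all add: step_ok_rec_iff)
  from assms(1,3) have B: "S (nnth p 1) (ntl a) (nnth x' 0)"
    "\<forall>j<nnth a 0. S (nnth p 2) (ncons j (ncons (nnth x' j) (ntl a))) (nnth x' (Suc j))"
    "y' = nnth x' (nnth a 0)"
    by (simp_all add: step_ok_rec_iff)
  have "j \<le> nnth a 0 \<Longrightarrow> nnth x j = nnth x' j" for j
  proof (induction j)
    case 0
    from A(1) B(1) show ?case
      by (rule det)
  next
    case (Suc j)
    then have j: "j < nnth a 0" and eq: "nnth x j = nnth x' j"
      by simp_all
    have "R (nnth p 2) (ncons j (ncons (nnth x j) (ntl a))) (nnth x (Suc j))"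
      using A(2) j by blast
    moreover have "S (nnth p 2) (ncons j (ncons (nnth x j) (ntl a))) (nnth x' (Suc j))"
      using B(2) j eq by simp
    ultimately show ?case
      by (rule det)
  qed
  with A(3) B(3) show ?thesis
    by simp
qed

text \<open>Both outputs of a minimisation are the least argument with value \<open>0\<close>.\<close>

lemma step_ok_det_min:
  assumes "nnth p 0 = 5" "step_ok R (nonzero_val R) p a y x" "step_ok S (nonzero_val S) p a y' x'"
    and det: "\<And>p a z z'. R p a z \<Longrightarrow> S p a z' \<Longrightarrow> z = z'"
  shows "y = y'"
proof -
  from assms(1,2) have A: "R (nnth p 1) (ncons y a) 0" "\<forall>j<y. nonzero_val R (nnth p 1) (ncons j a)"
    by (simp_all add: step_ok_min_iff)
  from assms(1,3) have B: "S (nnth p 1) (ncons y' a) 0" "\<forall>j<y'. nonzero_val S (nnth p 1) (ncons j a)"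
    by (simp_all add: step_ok_min_iff)
  have "\<not> y < y'"
    using A(1) B(2) det by (fastforce simp: nonzero_val_def)
  moreover have "\<not> y' < y"
    using A(2) B(1) det by (fastforce simp: nonzero_val_def)
  ultimately show ?thesis
    by simp
qed

lemma step_ok_det:
  assumes "step_ok R (nonzero_val R) p a y x" "step_ok S (nonzero_val S) p a y' x'"
    and det: "\<And>p a z z'. R p a z \<Longrightarrow> S p a z' \<Longrightarrow> z = z'"
  shows "y = y'"
proof -
  consider "nnth p 0 = 3" | "nnth p 0 = 4" | "nnth p 0 = 5"
    | "nnth p 0 = 0" | "nnth p 0 = 1" | "nnth p 0 = 2" | "nnth p 0 > 5"
    by linarith
  then show ?thesis
  proof cases
    case 1
    from this assms(1,2) show ?thesis
      by (rule step_ok_det_comp[OF _ _ _ det])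
  next
    case 2
    from this assms(1,2) show ?thesis
      by (rule step_ok_det_rec[OF _ _ _ det])
  next
    case 3
    from this assms(1,2) show ?thesis
      by (rule step_ok_det_min[OF _ _ _ det])
  qed (use assms(1,2) in \<open>simp add: step_ok_def\<close>)+
qed

lemma computes_det: "computes p a y \<Longrightarrow> computes p a y' \<Longrightarrow> y = y'"
proof (induction arbitrary: y' rule: computes.induct)
  case (step p a y x)
  from step.prems obtain x' where "step_ok computes (nonzero_val computes) p a y' x'"
    by (cases rule: computes.cases) blast
  with step.IH show ?case
    by (rule step_ok_det) blast
qed

text \<open>
  A derivation is a list of lines \<open>[p, a, y, x]\<close>, each justified by a computation step whose
  premises occur on earlier lines.
\<close>

definition derived :: "nat set \<Rightarrow> nat \<Rightarrow> nat \<Rightarrow> nat \<Rightarrow> bool" where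
  "derived E p a y \<longleftrightarrow> (\<exists>l\<in>E. nnth l 0 = p \<and> nnth l 1 = a \<and> nnth l 2 = y)"

definition line_ok :: "nat set \<Rightarrow> nat \<Rightarrow> bool" where
  "line_ok E l \<longleftrightarrow>
    step_ok (derived E) (nonzero_val (derived E)) (nnth l 0) (nnth l 1) (nnth l 2) (nnth l 3)"

definition derivation :: "nat list \<Rightarrow> bool" where
  "derivation L \<longleftrightarrow> (\<forall>k<length L. line_ok (set (take k L)) (L ! k))"

definition derivable :: "nat \<Rightarrow> nat \<Rightarrow> nat \<Rightarrow> bool" where
  "derivable p a y \<longleftrightarrow> (\<exists>L. derivation L \<and> derived (set L) p a y)"

lemma derived_mono: "derived E p a y \<Longrightarrow> E \<subseteq> F \<Longrightarrow> derived F p a y"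
  unfolding derived_def by blast

lemma line_ok_mono: "line_ok E l \<Longrightarrow> E \<subseteq> F \<Longrightarrow> line_ok F l"
  unfolding line_ok_def nonzero_val_def by (erule step_ok_mono) (auto intro: derived_mono)

lemma derivation_Nil [simp]: "derivation []"
  by (simp add: derivation_def)

lemma derivation_snoc_iff: "derivation (L @ [l]) \<longleftrightarrow> derivation L \<and> line_ok (set L) l"
  by (auto simp: derivation_def nth_append less_Suc_eq)

lemma derivation_append: "derivation A \<Longrightarrow> derivation B \<Longrightarrow> derivation (A @ B)"
proof (induction B rule: rev_induct)
  case (snoc l B)
  then show ?case
    using line_ok_mono[of "set B" l "set (A @ B)"]
    by (auto simp flip: append_assoc simp: derivation_snoc_iff)
qed simp

lemma derivation_sound: "derivation L \<Longrightarrow> derived (set L) p a y \<Longrightarrow> computes p a y"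
proof (induction L arbitrary: p a y rule: rev_induct)
  case (snoc l L)
  have IH: "derived (set L) p a y \<Longrightarrow> computes p a y" for p a y
    using snoc by (simp add: derivation_snoc_iff)
  have "line_ok (set L) l"
    using snoc.prems(1) by (simp add: derivation_snoc_iff)
  then have "step_ok computes (nonzero_val computes) (nnth l 0) (nnth l 1) (nnth l 2) (nnth l 3)"
    unfolding line_ok_def by (rule step_ok_mono) (auto simp: IH nonzero_val_def)
  then have "computes (nnth l 0) (nnth l 1) (nnth l 2)"
    by (rule computes.step)
  then show ?case
    using snoc.prems(2) IH by (auto simp: derived_def)
qed (simp add: derived_def)

lemma derivation_collect:
  assumes "finite S" "\<And>p a y. (p, a, y) \<in> S \<Longrightarrow> derivable p a y"
  shows "\<exists>L. derivation L \<and> (\<forall>(p, a, y)\<in>S. derived (set L) p a y)"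
  using assms
proof (induction rule: finite_induct)
  case (insert t S)
  then obtain L where L: "derivation L" "\<forall>(p, a, y)\<in>S. derived (set L) p a y"
    by blast
  obtain p a y where t: "t = (p, a, y)"
    by (cases t)
  with insert.prems have "derivable p a y"
    by blast
  then obtain L' where L': "derivation L'" "derived (set L') p a y"
    by (auto simp: derivable_def)
  have "\<forall>(p, a, y)\<in>insert t S. derived (set (L @ L')) p a y"
    using L(2) L'(2) t by (auto intro: derived_mono)
  then show ?case
    using derivation_append[OF L(1) L'(1)] by blast
qed (use derivation_Nil in blast)

lemma step_ok_derivable:
  assumes ok: "step_ok derivable (nonzero_val derivable) p a y x"
  shows "\<exists>L. derivation L \<and> step_ok (derived (set L)) (nonzero_val (derived (set L))) p a y x"
proof -
  consider (comp) "nnth p 0 = 3" | (rec) "nnth p 0 = 4" | (min) "nnth p 0 = 5"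
    | (basic) "nnth p 0 \<notin> {3, 4, 5}"
    by blast
  then show ?thesis
  proof cases
    case comp
    let ?S = "insert (nnth p 1, x, y) ((\<lambda>j. (nnth (nnth p 2) j, a, nnth x j)) ` {..<nlen (nnth p 2)})"
    obtain L where "derivation L" "\<forall>(p, a, y)\<in>?S. derived (set L) p a y"
      using derivation_collect[of ?S] ok comp by (auto simp: step_ok_comp_iff)
    with ok comp show ?thesis
      by (auto simp: step_ok_comp_iff)
  next
    case rec
    let ?S = "insert (nnth p 1, ntl a, nnth x 0)
      ((\<lambda>j. (nnth p 2, ncons j (ncons (nnth x j) (ntl a)), nnth x (Suc j))) ` {..<nnth a 0})"
    obtain L where "derivation L" "\<forall>(p, a, y)\<in>?S. derived (set L) p a y"
      using derivation_collect[of ?S] ok rec by (auto simp: step_ok_rec_iff)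
    with ok rec show ?thesis
      by (auto simp: step_ok_rec_iff)
  next
    case min
    with ok have "\<forall>j<y. \<exists>v. v \<noteq> 0 \<and> derivable (nnth p 1) (ncons j a) v"
      by (simp add: step_ok_min_iff nonzero_val_def)
    then obtain V where V: "\<forall>j<y. V j \<noteq> 0 \<and> derivable (nnth p 1) (ncons j a) (V j)"
      by metis
    let ?S = "insert (nnth p 1, ncons y a, 0) ((\<lambda>j. (nnth p 1, ncons j a, V j)) ` {..<y})"
    obtain L where "derivation L" "\<forall>(p, a, y)\<in>?S. derived (set L) p a y"
      using derivation_collect[of ?S] ok min V by (auto simp: step_ok_min_iff)
    with V min show ?thesis
      by (auto simp: step_ok_min_iff nonzero_val_def)
  next
    case basic
    with ok show ?thesis
      using derivation_Nil step_ok_basic_iff by blast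
  qed
qed

lemma computes_derivable: "computes p a y \<Longrightarrow> derivable p a y"
proof (induction rule: computes.induct)
  case (step p a y x)
  then have "step_ok derivable (nonzero_val derivable) p a y x"
    by (rule step_ok_mono) (auto simp: nonzero_val_def)
  then obtain L where L: "derivation L"
    "step_ok (derived (set L)) (nonzero_val (derived (set L))) p a y x"
    using step_ok_derivable by blast
  have "derivation (L @ [list_encode [p, a, y, x]])"
    using L by (simp add: derivation_snoc_iff line_ok_def)
  then show ?case
    unfolding derivable_def derived_def by force
qed

definition computes_fun :: "nat \<Rightarrow> nat \<Rightarrow> (nat list \<Rightarrow> nat) \<Rightarrow> bool" where
  "computes_fun p n f \<longleftrightarrow> (\<forall>xs. length xs = n \<longrightarrow> computes p (list_encode xs) (f xs))"

lemma computes_fun_comp: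
  assumes "computes_fun pg m g" "length fs = m" "\<forall>i<m. computes_fun (P i) n (fs ! i)"
  shows "computes_fun (list_encode [3, pg, list_encode (map P [0..<m])]) n (\<lambda>xs. g (map (\<lambda>f. f xs) fs))"
  unfolding computes_fun_def
proof (intro allI impI)
  fix xs :: "nat list"
  assume "length xs = n"
  with assms show "computes (list_encode [3, pg, list_encode (map P [0..<m])]) (list_encode xs)
      (g (map (\<lambda>f. f xs) fs))"
    by (intro computes.step[where x="list_encode (map (\<lambda>f. f xs) fs)"])
      (simp add: step_ok_comp_iff computes_fun_def nnth_list_encode)
qed

lemma computes_fun_rec_nat:
  assumes g: "computes_fun pg n g" and h: "computes_fun ph (n + 2) h"
  shows "computes_fun (list_encode [4, pg, ph]) (n + 1)
    (\<lambda>xs. rec_nat (g (tl xs)) (\<lambda>y r. h (y # r # tl xs)) (hd xs))"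
  unfolding computes_fun_def
proof (intro allI impI)
  fix xs :: "nat list"
  assume "length xs = n + 1"
  then obtain k rest where xs: "xs = k # rest" and rest: "length rest = n"
    by (cases xs) auto
  define r where "r j = rec_nat (g rest) (\<lambda>y r. h (y # r # rest)) j" for j
  have "computes ph (list_encode (j # r j # rest)) (r (Suc j))" for j
    using h rest by (simp add: computes_fun_def r_def)
  then have "computes (list_encode [4, pg, ph]) (list_encode (k # rest)) (r k)"
    using g rest
    by (intro computes.step[where x="list_encode (map r [0..<Suc k])"])
      (simp add: step_ok_rec_iff computes_fun_def nnth_list_encode r_def flip: list_encode_Cons
        del: upt_Suc)
  then show "computes (list_encode [4, pg, ph]) (list_encode xs)
      (rec_nat (g (tl xs)) (\<lambda>y r. h (y # r # tl xs)) (hd xs))"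
    by (simp add: xs r_def)
qed

lemma computes_fun_Least:
  assumes g: "computes_fun pg (n + 1) g" and ex: "\<forall>xs. length xs = n \<longrightarrow> (\<exists>y. g (y # xs) = 0)"
  shows "computes_fun (list_encode [5, pg]) n (\<lambda>xs. LEAST y. g (y # xs) = 0)"
  unfolding computes_fun_def
proof (intro allI impI)
  fix xs :: "nat list"
  assume xs: "length xs = n"
  let ?y = "LEAST y. g (y # xs) = 0"
  have "computes pg (list_encode (?y # xs)) 0"
    using g[unfolded computes_fun_def, rule_format, of "?y # xs"] xs
      LeastI_ex[of "\<lambda>y. g (y # xs) = 0"] ex by simp
  moreover have "nonzero_val computes pg (list_encode (j # xs))" if "j < ?y" for j
    using g[unfolded computes_fun_def, rule_format, of "j # xs"] xs not_less_Least[OF that]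
    by (auto simp: nonzero_val_def)
  ultimately show "computes (list_encode [5, pg]) (list_encode xs) ?y"
    by (intro computes.step[where x=0]) (simp add: step_ok_min_iff nnth_list_encode flip: list_encode_Cons)
qed

lemma computes_fun_zero: "computes_fun (list_encode [0]) n (\<lambda>_. 0)"
  by (auto simp: computes_fun_def step_ok_def intro: computes.step[where x=0])

lemma rec_in_empty_computes_fun: "rec_in X n f \<Longrightarrow> X = {} \<Longrightarrow> \<exists>p. computes_fun p n f"
proof (induction rule: rec_in.induct)
  case (zero n)
  then show ?case
    using computes_fun_zero by blast
next
  case succ
  have "computes_fun (list_encode [1]) 1 (\<lambda>xs. Suc (hd xs))"
    by (auto simp: computes_fun_def hd_eq_nth0 nnth_list_encode step_ok_def intro!: computes.step[where x=0])
  then show ?case by blast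
next
  case (proj i n)
  then have "computes_fun (list_encode [2, i]) n (\<lambda>xs. xs ! i)"
    by (auto simp: computes_fun_def nnth_list_encode step_ok_def intro!: computes.step[where x=0])
  then show ?case by blast
next
  case char_X
  then show ?case
    using computes_fun_zero by auto
next
  case (comp m g fs n)
  then obtain P where "\<forall>i<m. computes_fun (P i) n (fs ! i)"
    by metis
  with comp show ?case
    using computes_fun_comp by blast
next
  case (prim_rec n g h)
  then show ?case
    using computes_fun_rec_nat by blast
next
  case (mu n g)
  then show ?case
    using computes_fun_Least by blast
next
  case (ext n f f')
  then show ?case
    by (metis computes_fun_def)
qed

section \<open>A budgeted universal evaluator\<close>

definition derived_code :: "nat \<Rightarrow> nat \<Rightarrow> nat \<Rightarrow> nat \<Rightarrow> nat \<Rightarrow> bool" where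
  "derived_code c k p a y \<longleftrightarrow>
    (\<exists>i<k. nnth (nnth c i) 0 = p \<and> nnth (nnth c i) 1 = a \<and> nnth (nnth c i) 2 = y)"

definition nonzero_code :: "nat \<Rightarrow> nat \<Rightarrow> nat \<Rightarrow> nat \<Rightarrow> bool" where
  "nonzero_code c k p a \<longleftrightarrow>
    (\<exists>i<k. nnth (nnth c i) 0 = p \<and> nnth (nnth c i) 1 = a \<and> nnth (nnth c i) 2 \<noteq> 0)"

definition derivation_code :: "nat \<Rightarrow> bool" where
  "derivation_code c \<longleftrightarrow> (\<forall>k<nlen c. step_ok (derived_code c k) (nonzero_code c k)
     (nnth (nnth c k) 0) (nnth (nnth c k) 1) (nnth (nnth c k) 2) (nnth (nnth c k) 3))"

lemma bex_set_take: "k \<le> length L \<Longrightarrow> (\<exists>l\<in>set (take k L). Q l) \<longleftrightarrow> (\<exists>i<k. Q (L ! i))"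
proof -
  assume k: "k \<le> length L"
  have "(\<exists>l\<in>set (take k L). Q l) \<longleftrightarrow> (\<exists>i<length (take k L). Q (take k L ! i))"
    by (metis in_set_conv_nth)
  also have "\<dots> \<longleftrightarrow> (\<exists>i<k. Q (L ! i))"
    using k by (auto simp: min_def)
  finally show ?thesis .
qed

lemma derived_code_list_encode:
  "k \<le> length L \<Longrightarrow> derived_code (list_encode L) k p a y \<longleftrightarrow> derived (set (take k L)) p a y"
  unfolding derived_code_def derived_def by (subst bex_set_take) (auto simp: nnth_list_encode)

lemma nonzero_code_list_encode:
  "k \<le> length L \<Longrightarrow> nonzero_code (list_encode L) k p a \<longleftrightarrow> nonzero_val (derived (set (take k L))) p a"
  unfolding nonzero_code_def nonzero_val_def derived_def
  by (subst bex_set_take, auto simp: nnth_list_encode, blast)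

lemma derivation_code_list_encode: "derivation_code (list_encode L) \<longleftrightarrow> derivation L"
proof -
  have "derived_code (list_encode L) k = derived (set (take k L))"
    "nonzero_code (list_encode L) k = nonzero_val (derived (set (take k L)))" if "k < length L" for k
    using that by (simp_all add: fun_eq_iff derived_code_list_encode nonzero_code_list_encode)
  then show ?thesis
    by (simp add: derivation_code_def derivation_def line_ok_def nnth_list_encode)
qed

lemma rec_pred_derivation_code: "rec_in X n c \<Longrightarrow> rec_pred X n (\<lambda>xs. derivation_code (c xs))"
proof -
  have "rec_pred X 1 (\<lambda>xs. derivation_code (xs!0))"
    unfolding derivation_code_def step_ok_def derived_code_def nonzero_code_def
    by (intro rec_intros code_intros | simp only: drop_drop)+
  then show "rec_in X n c \<Longrightarrow> rec_pred X n (\<lambda>xs. derivation_code (c xs))"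
    unfolding rec_pred_def by (rule rec_in_comp1)
qed

text \<open>
  A witness for the computation of \<open>p\<close> on \<open>a\<close> pairs a coded derivation with the position of a
  line for \<open>p\<close> and \<open>a\<close>.
\<close>

definition witness :: "nat \<Rightarrow> nat \<Rightarrow> nat \<Rightarrow> bool" where
  "witness p a w \<longleftrightarrow> derivation_code (nfst w) \<and> nsnd w < nlen (nfst w) \<and>
     nnth (nnth (nfst w) (nsnd w)) 0 = p \<and> nnth (nnth (nfst w) (nsnd w)) 1 = a"

definition witness_out :: "nat \<Rightarrow> nat" where
  "witness_out w = nnth (nnth (nfst w) (nsnd w)) 2"

definition run :: "nat \<Rightarrow> nat \<Rightarrow> nat \<Rightarrow> nat" where
  "run t p a = (if (LEAST w. witness p a w \<or> w = t) < t
     then Suc (witness_out (LEAST w. witness p a w \<or> w = t)) else 0)"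

lemma witness_sound: "witness p a w \<Longrightarrow> computes p a (witness_out w)"
proof -
  assume w: "witness p a w"
  obtain L where L: "nfst w = list_encode L"
    by (metis list_decode_inverse)
  with w have "derivation L" "nsnd w < length L"
    by (simp_all add: witness_def derivation_code_list_encode)
  moreover have "derived (set L) p a (witness_out w)"
    using w L calculation(2) nth_mem by (fastforce simp: witness_def witness_out_def derived_def nnth_list_encode)
  ultimately show ?thesis
    using derivation_sound by blast
qed

lemma computes_witness: "computes p a y \<Longrightarrow> \<exists>w. witness p a w"
proof -
  assume "computes p a y"
  then obtain L where "derivation L" "derived (set L) p a y"
    using computes_derivable unfolding derivable_def by blast
  then obtain i where "i < length L" "nnth (L ! i) 0 = p" "nnth (L ! i) 1 = a"
    by (auto simp: derived_def in_set_conv_nth)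
  with \<open>derivation L\<close> have "witness p a (npair (list_encode L) i)"
    by (simp add: witness_def derivation_code_list_encode nnth_list_encode)
  then show ?thesis ..
qed

lemma run_neq_0_iff: "run t p a \<noteq> 0 \<longleftrightarrow> (\<exists>w<t. witness p a w)"
proof
  let ?w = "LEAST w. witness p a w \<or> w = t"
  assume "run t p a \<noteq> 0"
  then have "?w < t"
    by (simp add: run_def split: if_splits)
  moreover have "witness p a ?w \<or> ?w = t"
    by (rule LeastI[of _ t]) simp
  ultimately show "\<exists>w<t. witness p a w"
    by auto
next
  let ?w = "LEAST w. witness p a w \<or> w = t"
  assume "\<exists>w<t. witness p a w"
  then obtain w where "w < t" "witness p a w"
    by blast
  moreover have "?w \<le> w"
    by (rule Least_le) (simp add: \<open>witness p a w\<close>)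
  ultimately show "run t p a \<noteq> 0"
    by (simp add: run_def)
qed

lemma run_sound: "run t p a = Suc y \<Longrightarrow> computes p a y"
proof -
  let ?w = "LEAST w. witness p a w \<or> w = t"
  assume run: "run t p a = Suc y"
  then have "?w < t"
    by (simp add: run_def split: if_splits)
  moreover have "witness p a ?w \<or> ?w = t"
    by (rule LeastI[of _ t]) simp
  ultimately have "witness p a ?w"
    by simp
  moreover have "witness_out ?w = y"
    using run \<open>?w < t\<close> by (simp add: run_def)
  ultimately show ?thesis
    using witness_sound by blast
qed

lemma run_eq_Suc_if_computes: "computes p a y \<Longrightarrow> run t p a \<noteq> 0 \<Longrightarrow> run t p a = Suc y"
proof -
  assume y: "computes p a y" and "run t p a \<noteq> 0"
  then obtain y' where y': "run t p a = Suc y'"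
    using not0_implies_Suc by blast
  then have "computes p a y'"
    by (rule run_sound)
  with y y' show ?thesis
    using computes_det by blast
qed

lemma run_mono: "run t p a = Suc y \<Longrightarrow> t \<le> t' \<Longrightarrow> run t' p a = Suc y"
proof -
  assume run: "run t p a = Suc y" and "t \<le> t'"
  then have "run t' p a \<noteq> 0"
    using run_neq_0_iff[of t p a] run_neq_0_iff[of t' p a] by fastforce
  with run show ?thesis
    using run_sound run_eq_Suc_if_computes by blast
qed

lemma run_eventually: "computes p a y \<Longrightarrow> \<exists>t0. \<forall>t\<ge>t0. run t p a = Suc y"
proof -
  assume y: "computes p a y"
  then obtain w where "witness p a w"
    using computes_witness by blast
  then have "run t p a \<noteq> 0" if "t \<ge> Suc w" for t
    using that run_neq_0_iff[of t p a] by auto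
  with y show ?thesis
    using run_eq_Suc_if_computes by blast
qed

lemma rec_in_run:
  "rec_in X n t \<Longrightarrow> rec_in X n p \<Longrightarrow> rec_in X n a \<Longrightarrow> rec_in X n (\<lambda>xs. run (t xs) (p xs) (a xs))"
proof -
  have "rec_in X 3 (\<lambda>xs. run (xs!0) (xs!1) (xs!2))"
    unfolding run_def witness_def witness_out_def
    by (intro rec_intros code_intros rec_pred_derivation_code | simp only: drop_drop)+ auto
  then have "rec_in X n (\<lambda>xs. (\<lambda>ys. run (ys!0) (ys!1) (ys!2)) (map (\<lambda>f. f xs) [t, p, a]))"
    if "rec_in X n t" "rec_in X n p" "rec_in X n a"
    by (rule rec_in_comp) (use that in \<open>auto simp: less_Suc_eq numeral_3_eq_3\<close>)
  then show "rec_in X n t \<Longrightarrow> rec_in X n p \<Longrightarrow> rec_in X n a \<Longrightarrow> rec_in X n (\<lambda>xs. run (t xs) (p xs) (a xs))"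
    by simp
qed

lemma recursive_program:
  assumes "recursive_fun f"
  obtains p where "\<And>x. computes p (list_encode [x]) (f x)"
proof -
  have "rec_in {} 1 (\<lambda>xs. f (hd xs))"
    using assms by (simp add: recursive_fun_def computable_in_def)
  then obtain p where p: "computes_fun p 1 (\<lambda>xs. f (hd xs))"
    using rec_in_empty_computes_fun by blast
  have "computes p (list_encode [x]) (f x)" for x
    using p[unfolded computes_fun_def, rule_format, of "[x]"] by simp
  then show ?thesis
    by (rule that)
qed

lemma enumerate_eq_rec_nat:
  "infinite H \<Longrightarrow> enumerate H n = rec_nat (LEAST s. s \<in> H) (\<lambda>y r. LEAST s. s \<in> H \<and> r < s) n"
  by (induction n) (auto simp: enumerate_Suc'' enumerate_0)

lemma computable_enumerate:
  assumes inf: "infinite H" and H: "computable_set_in X H"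
  shows "computable_in X (enumerate H)"
proof -
  have ex: "\<exists>s. s \<in> H \<and> r < s" for r
    using inf by (meson infinite_nat_iff_unbounded)
  have "rec_in X 1 (\<lambda>xs. rec_nat (LEAST s. s \<in> H) (\<lambda>y r. LEAST s. s \<in> H \<and> r < s) (xs!0))"
  proof (rule rec_in_rec_nat)
    show "rec_in X 1 (\<lambda>xs. xs!0)"
      by (rule rec_in.proj) simp
    show "rec_in X 1 (\<lambda>xs. LEAST s. s \<in> H)"
      by (rule rec_in_Least) (rule rec_pred_computable_set[OF H rec_in.proj], simp,
        use inf infinite_imp_nonempty in blast)
    show "rec_in X (Suc (Suc 1)) (\<lambda>ys. LEAST s. s \<in> H \<and> ys!1 < s)"
      by (rule rec_in_Least) ((intro rec_pred_conj rec_pred_computable_set[OF H] rec_intros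
          | simp only: drop_drop)+, use ex in blast)
  qed
  then show ?thesis
    unfolding computable_in_iff using enumerate_eq_rec_nat[OF inf] by simp
qed

text \<open>
  \<open>scan t p m x\<close> is the pair of the number and the canonical code of the first at most \<open>m\<close>
  arguments \<open>y < x\<close> that \<open>p\<close> accepts within budget \<open>t\<close>.
\<close>

definition scan :: "nat \<Rightarrow> nat \<Rightarrow> nat \<Rightarrow> nat \<Rightarrow> nat" where
  "scan t p m x = rec_nat (npair 0 0) (\<lambda>y s.
     if nfst s < m \<and> run t p (list_encode [y]) = Suc 1 then npair (Suc (nfst s)) (nsnd s + 2 ^ y) else s) x"

lemma scan_0 [simp]: "scan t p m 0 = npair 0 0"
  by (simp add: scan_def)

lemma scan_Suc: "scan t p m (Suc x) =
   (if nfst (scan t p m x) < m \<and> run t p (list_encode [x]) = Suc 1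
    then npair (Suc (nfst (scan t p m x))) (nsnd (scan t p m x) + 2 ^ x) else scan t p m x)"
  by (simp add: scan_def)

lemma card_less_Suc:
  "card {y\<in>R. y < Suc k} = (if k \<in> R then Suc (card {y\<in>R. y < k}) else card {y\<in>R. y < k})"
proof -
  have "{y\<in>R. y < Suc k} = (if k \<in> R then insert k {y\<in>R. y < k} else {y\<in>R. y < k})"
    by (auto simp: less_Suc_eq)
  then show ?thesis
    by simp
qed

lemma scan_correct:
  assumes run: "\<And>x. x < K \<Longrightarrow> run t p (list_encode [x]) = Suc (if x \<in> R then 1 else 0)"
    and card: "card {y\<in>R. y < K} = m" and below: "\<And>k. k < K \<Longrightarrow> card {y\<in>R. y < k} < m"
    and "K \<le> x"
  shows "scan t p m x = npair m (set_encode {y\<in>R. y < K})"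
proof -
  have prefix: "scan t p m k = npair (card {y\<in>R. y < k}) (set_encode {y\<in>R. y < k})" if "k \<le> K" for k
    using that
  proof (induction k)
    case (Suc k)
    then have "k < K"
      by simp
    have "{y\<in>R. y < Suc k} = (if k \<in> R then insert k {y\<in>R. y < k} else {y\<in>R. y < k})"
      by (auto simp: less_Suc_eq)
    then show ?case
      using Suc run[OF \<open>k < K\<close>] below[OF \<open>k < K\<close>] by (simp add: scan_Suc add.commute)
  qed simp
  have "scan t p m k = scan t p m K" if "K \<le> k" for k
    using that
  proof (induction k)
    case (Suc k)
    then show ?case
      using prefix[of K] card by (cases "K = Suc k") (simp_all add: scan_Suc)
  qed simp
  then show ?thesis
    using prefix[of K] card \<open>K \<le> x\<close> by simp
qed

text \<open>
  The index \<open>2 c\<close> names the set with canonical code \<open>c\<close>; the index \<open>e = 2 \<langle>p, n\<rangle> + 1\<close>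
  names the first \<open>e + 2\<close> arguments below \<open>g n\<close> that \<open>p\<close> accepts within budget \<open>g n\<close>,
  or \<open>\<emptyset>\<close> if there are fewer.
\<close>

definition scan_code :: "(nat \<Rightarrow> nat) \<Rightarrow> nat \<Rightarrow> nat" where
  "scan_code g e = (if e mod 2 = 0 then e div 2 else
     (if nfst (scan (g (nsnd (e div 2))) (nfst (e div 2)) (e + 2) (g (nsnd (e div 2)))) = e + 2
      then nsnd (scan (g (nsnd (e div 2))) (nfst (e div 2)) (e + 2) (g (nsnd (e div 2)))) else 0))"

definition scan_numbering :: "(nat \<Rightarrow> nat) \<Rightarrow> nat \<Rightarrow> nat set" where
  "scan_numbering g e = set_decode (scan_code g e)"

lemma numbering_scan_numbering: "numbering (scan_numbering g)"
  unfolding numbering_def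
proof
  show "range (scan_numbering g) \<subseteq> {A. finite A}"
    by (auto simp: scan_numbering_def)
  show "{A. finite A} \<subseteq> range (scan_numbering g)"
  proof
    fix A :: "nat set"
    assume "A \<in> {A. finite A}"
    then have "scan_numbering g (2 * set_encode A) = A"
      by (simp add: scan_numbering_def scan_code_def)
    then show "A \<in> range (scan_numbering g)"
      by (metis rangeI)
  qed
qed

lemma canon_eq_set_encode: "canon = set_encode"
  by (auto simp: canon_def set_encode_def fun_eq_iff)

lemma rec_in_scan:
  assumes "rec_in X n t" "rec_in X n p" "rec_in X n m" "rec_in X n x"
  shows "rec_in X n (\<lambda>xs. scan (t xs) (p xs) (m xs) (x xs))"
  unfolding scan_def list_encode_Cons list_encode.simps(1)
  by (rule rec_in_rec_nat[OF assms(4)])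
    (intro rec_intros code_intros rec_in_power2 rec_in_run rec_in_drop2 assms | simp only: drop_drop)+

lemma rec_in_scan_code: "computable_in X g \<Longrightarrow> rec_in X 1 (\<lambda>xs. scan_code g (xs!0))"
  unfolding scan_code_def
  by (intro rec_intros rec_in_div rec_in_mod rec_in_scan rec_in_nfst rec_in_nsnd
      rec_in_computable[of X g] | assumption)+ simp_all

lemma mem_set_decode_iff: "x \<in> set_decode c \<longleftrightarrow> (c div 2 ^ x) mod 2 = 1"
  by (simp add: set_decode_def odd_iff_mod_2_eq_one)

lemma computes_scan_numbering: "computable_in X g \<Longrightarrow> computes_numbering X (scan_numbering g)"
proof -
  assume g: "computable_in X g"
  have "computable_in X (\<lambda>e. canon (scan_numbering g e))"
    unfolding computable_in_iff canon_eq_set_encode scan_numbering_def using rec_in_scan_code[OF g] by simp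
  moreover have "rec_in X 2 (\<lambda>xs. if (scan_code g (xs!0) div 2 ^ (xs!1)) mod 2 = 1 then 1 else 0)"
    by (intro rec_intros rec_in_div rec_in_mod rec_in_power2 rec_in_comp1[OF rec_in_scan_code[OF g]]
        | simp)+
  then have "computable_rel_in X (\<lambda>e x. x \<in> scan_numbering g e)"
    unfolding computable_rel_in_def scan_numbering_def mem_set_decode_iff .
  ultimately show ?thesis
    by (simp add: computes_numbering_def)
qed

section \<open>Hyperimmune degrees compute pandemic numberings\<close>

lemma card_less_unbounded: "infinite (R :: nat set) \<Longrightarrow> \<exists>k. M \<le> card {y\<in>R. y < k}"
proof -
  assume "infinite R"
  then obtain B where B: "B \<subseteq> R" "finite B" "card B = M"
    using infinite_arbitrarily_large by blast
  then have "B \<subseteq> {y\<in>R. y < Suc (Max (insert 0 B))}"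
    by (auto simp: le_imp_less_Suc)
  then have "card B \<le> card {y\<in>R. y < Suc (Max (insert 0 B))}"
    by (intro card_mono) auto
  with B show ?thesis
    by blast
qed

lemma card_less_eq_sum: "card {y\<in>R. y < (k :: nat)} = (\<Sum>y<k. if y \<in> R then 1 else 0)"
  by (induction k) (simp_all add: card_less_Suc)

text \<open>
  For a program \<open>p\<close> deciding \<open>R\<close>, the index \<open>2 \<langle>p, n\<rangle> + 1\<close> of the scanning numbering
  asks for the first \<open>scan_size p n\<close> elements of \<open>R\<close>; they lie below \<open>scan_bound R p n\<close>, and
  \<open>scan_time p K\<close> is the budget needed to decide all arguments below \<open>K\<close>.
\<close>

definition scan_size :: "nat \<Rightarrow> nat \<Rightarrow> nat" where
  "scan_size p n = 2 * npair p n + 3"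

definition scan_bound :: "nat set \<Rightarrow> nat \<Rightarrow> nat \<Rightarrow> nat" where
  "scan_bound R p n = (LEAST k. scan_size p n \<le> card {y\<in>R. y < k})"

definition scan_time :: "nat \<Rightarrow> nat \<Rightarrow> nat" where
  "scan_time p K = (LEAST t. \<forall>x<K. run t p (list_encode [x]) \<noteq> 0)"

lemma card_less_scan_bound: "k < scan_bound R p n \<Longrightarrow> card {y\<in>R. y < k} < scan_size p n"
  unfolding scan_bound_def using not_less_Least by (metis not_le)

lemma card_scan_bound:
  assumes "infinite R"
  shows "card {y\<in>R. y < scan_bound R p n} = scan_size p n"
proof -
  have ge: "scan_size p n \<le> card {y\<in>R. y < scan_bound R p n}"
    unfolding scan_bound_def by (rule LeastI_ex) (rule card_less_unbounded[OF assms])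
  moreover have "scan_bound R p n \<noteq> 0"
  proof
    assume "scan_bound R p n = 0"
    with ge show False
      by (simp add: scan_size_def)
  qed
  ultimately obtain k where k: "scan_bound R p n = Suc k"
    using not0_implies_Suc by blast
  then have "card {y\<in>R. y < k} < scan_size p n"
    using card_less_scan_bound by simp
  with ge k show ?thesis
    by (auto simp: card_less_Suc split: if_splits)
qed

lemma run_budget_exists:
  fixes K :: nat
  assumes "\<And>x. \<exists>y. computes p (list_encode [x]) y"
  shows "\<exists>t. \<forall>x<K. run t p (list_encode [x]) \<noteq> 0"
proof (induction K)
  case (Suc K)
  then obtain t where t: "\<forall>x<K. run t p (list_encode [x]) \<noteq> 0"
    by blast
  obtain t0 where t0: "\<forall>t\<ge>t0. run t p (list_encode [K]) \<noteq> 0"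
    using assms run_eventually by (metis nat.distinct(1))
  have "run (max t t0) p (list_encode [x]) \<noteq> 0" if "x < Suc K" for x
  proof (cases "x = K")
    case False
    with that t obtain z where "run t p (list_encode [x]) = Suc z"
      by (metis less_SucE not0_implies_Suc)
    then show ?thesis
      using run_mono[of t p _ z "max t t0"] by simp
  qed (use t0 in simp)
  then show ?case
    by blast
qed simp

lemma run_scan_time:
  "(\<And>x. \<exists>y. computes p (list_encode [x]) y) \<Longrightarrow> x < K \<Longrightarrow> run (scan_time p K) p (list_encode [x]) \<noteq> 0"
  unfolding scan_time_def using LeastI_ex[OF run_budget_exists] by blast

context
  fixes R :: "nat set" and p :: nat
  assumes R_infinite: "infinite R"
    and R_recursive: "recursive_set R"
    and p_decides_R: "\<And>x. computes p (list_encode [x]) (if x \<in> R then 1 else 0)"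
begin

lemma p_total: "\<exists>y. computes p (list_encode [x]) y"
  using p_decides_R by blast

lemma recursive_scan_budget: "recursive_fun (\<lambda>n. scan_bound R p n + scan_time p (scan_bound R p n))"
proof -
  have R: "computable_set_in {} R"
    using R_recursive by (simp add: recursive_set_def)
  have size: "\<exists>k. M \<le> (\<Sum>y<k. if y \<in> R then 1 else 0)" for M :: nat
    using card_less_unbounded[OF R_infinite] by (simp add: card_less_eq_sum)
  have time: "\<exists>t. \<forall>x<K. 0 < run t p (ncons x 0)" for K
    using run_budget_exists[OF p_total] by (simp add: list_encode_Cons)
  have "rec_in {} 1 (\<lambda>xs. (LEAST k. 2 * npair p (xs!0) + 3 \<le> (\<Sum>y<k. if y \<in> R then 1 else 0)) +
      (LEAST t. \<forall>x<(LEAST k. 2 * npair p (xs!0) + 3 \<le> (\<Sum>y<k. if y \<in> R then 1 else 0)).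
         run t p (ncons x 0) \<noteq> 0))"
    by (intro rec_intros code_intros rec_in_run rec_pred_computable_set[OF R] | simp only: drop_drop)+
      (simp_all add: size time, rule rec_in_proj_drop, simp)
  then show ?thesis
    unfolding recursive_fun_def computable_in_iff scan_time_def scan_bound_def scan_size_def
      card_less_eq_sum list_encode_Cons list_encode.simps(1) .
qed

lemma scan_numbering_eq_prefix:
  assumes "scan_bound R p n + scan_time p (scan_bound R p n) \<le> g n"
  shows "scan_numbering g (2 * npair p n + 1) = {y\<in>R. y < scan_bound R p n}"
proof -
  let ?K = "scan_bound R p n"
  have run: "run (g n) p (list_encode [x]) = Suc (if x \<in> R then 1 else 0)" if x: "x < ?K" for x
  proof -
    obtain z where z: "run (scan_time p ?K) p (list_encode [x]) = Suc z"
      using run_scan_time[OF p_total x] not0_implies_Suc by blast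
    then have "z = (if x \<in> R then 1 else 0)"
      using computes_det[OF run_sound[OF z] p_decides_R] by simp
    moreover have "scan_time p ?K \<le> g n"
      using assms by linarith
    ultimately show ?thesis
      using run_mono[OF z] by simp
  qed
  have "scan (g n) p (scan_size p n) (g n) = npair (scan_size p n) (set_encode {y\<in>R. y < ?K})"
    using scan_correct[OF run card_scan_bound[OF R_infinite] card_less_scan_bound] assms
    by (meson add_leE)
  moreover have "(2 * npair p n + 1) div 2 = npair p n" "(2 * npair p n + 1) mod 2 = 1"
    "2 * npair p n + 1 + 2 = scan_size p n"
    by (simp_all add: scan_size_def)
  ultimately show ?thesis
    by (simp add: scan_numbering_def scan_code_def)
qed

lemma endemic_scan_numbering:
  assumes escapes: "\<And>f. recursive_fun f \<Longrightarrow> \<not> dominates f g"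
  shows "endemic (\<lambda>e. e + 2) (scan_numbering g) R"
  unfolding endemic_def infinite_nat_iff_unbounded_le
proof
  fix N
  obtain n where n: "n \<ge> N" "scan_bound R p n + scan_time p (scan_bound R p n) < g n"
    using escapes[OF recursive_scan_budget] unfolding dominates_def by (meson not_le)
  let ?e = "2 * npair p n + 1"
  have "scan_numbering g ?e = {y\<in>R. y < scan_bound R p n}"
    using n by (intro scan_numbering_eq_prefix) simp
  moreover have "n \<le> npair p n"
    unfolding npair_def by (rule le_prod_encode_2)
  then have "?e \<ge> N"
    using n by linarith
  ultimately show "\<exists>e\<ge>N. e \<in> {e. e + 2 \<le> card (scan_numbering g e) \<and> scan_numbering g e \<subseteq> R}"
    using card_scan_bound[OF R_infinite, of p n] by (auto simp: scan_size_def)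
qed

end

lemma order_function_plus2: "order_function (\<lambda>e. e + 2)"
proof -
  have "recursive_fun (\<lambda>e. e + 2)"
    unfolding recursive_fun_def computable_in_iff by (intro rec_intros) simp
  moreover have "\<exists>n. k < n + (2::nat)" for k
    by (rule exI[of _ k]) simp
  ultimately show ?thesis
    by (simp add: order_function_def mono_def)
qed

theorem pandemic_numbering_if_hyperimmune:
  assumes "computable_set_in X H" "hyperimmune H"
  shows "\<exists>D. numbering D \<and> computes_numbering X D \<and> pandemic D"
proof -
  have H: "infinite H" "\<And>f. recursive_fun f \<Longrightarrow> \<not> dominates f (enumerate H)"
    using assms(2) by (auto simp: hyperimmune_def)
  have "endemic (\<lambda>e. e + 2) (scan_numbering (enumerate H)) R"
    if "infinite R" "recursive_set R" for R
  proof -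
    have "recursive_fun (\<lambda>x. if x \<in> R then 1 else 0)"
      using that(2) by (simp add: recursive_set_def recursive_fun_def computable_set_in_def)
    then obtain p where "\<And>x. computes p (list_encode [x]) (if x \<in> R then 1 else 0)"
      using recursive_program by blast
    with that show ?thesis
      using endemic_scan_numbering H(2) by blast
  qed
  then have "pandemic (scan_numbering (enumerate H))"
    unfolding pandemic_def using order_function_plus2 by blast
  then show ?thesis
    using numbering_scan_numbering computes_scan_numbering[OF computable_enumerate[OF H(1) assms(1)]]
    by blast
qed

section \<open>Pandemic numberings compute hyperimmune sets\<close>

lemma computable_set_range:
  assumes s: "strict_mono s" and c: "computable_in X s"
  shows "computable_set_in X (range s)"
proof -
  have "x \<in> range s \<longleftrightarrow> (\<exists>n<Suc x. s n = x)" for x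
    using strict_mono_imp_increasing[OF s] by (auto simp: less_Suc_eq_le)
  moreover have "rec_in X 1 (\<lambda>xs. if \<exists>n<Suc (xs!0). s n = xs!0 then 1 else 0)"
    by (intro rec_intros rec_in_computable[OF c] | simp only: drop_drop)+
  ultimately show ?thesis
    unfolding computable_set_in_def computable_in_iff by simp
qed

lemma infinite_range_strict_mono: "strict_mono (s :: nat \<Rightarrow> nat) \<Longrightarrow> infinite (range s)"
  by (simp add: range_inj_infinite strict_mono_imp_inj_on)

lemma enumerate_range_strict_mono:
  assumes s: "strict_mono (s :: nat \<Rightarrow> nat)"
  shows "enumerate (range s) n = s n"
proof (induction n)
  case 0
  have "(LEAST x. x \<in> range s) = s 0"
    by (rule Least_equality) (auto simp: strict_mono_less_eq[OF s])
  then show ?case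
    by (simp add: enumerate_0)
next
  case (Suc n)
  have "(LEAST t. t \<in> range s \<and> s n < t) = s (Suc n)"
    by (rule Least_equality) (auto simp: strict_mono_less[OF s] strict_mono_less_eq[OF s] Suc_le_eq)
  then show ?case
    using Suc enumerate_Suc''[OF infinite_range_strict_mono[OF s], of n] by simp
qed

definition running_max :: "(nat \<Rightarrow> nat) \<Rightarrow> nat \<Rightarrow> nat" where
  "running_max f n = rec_nat (f 0) (\<lambda>y r. max r (f (Suc y))) n"

lemma running_max_0 [simp]: "running_max f 0 = f 0"
  by (simp add: running_max_def)

lemma running_max_Suc [simp]: "running_max f (Suc n) = max (running_max f n) (f (Suc n))"
  by (simp add: running_max_def)

lemma le_running_max: "j \<le> n \<Longrightarrow> f j \<le> running_max f n"
  by (induction n) (auto simp: le_Suc_eq max.coboundedI1)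

lemma mono_running_max: "mono (running_max f)"
  by (simp add: mono_iff_le_Suc)

lemma computable_running_max:
  assumes "computable_in X f"
  shows "computable_in X (running_max f)"
  unfolding computable_in_iff running_max_def
  by (rule rec_in_rec_nat) (intro rec_intros rec_in_max rec_in_computable[OF assms] | simp only: drop_drop)+

lemma power2_le_canon: "finite A \<Longrightarrow> M \<in> A \<Longrightarrow> 2 ^ M \<le> canon A"
  unfolding canon_def by (rule member_le_sum) auto

definition sparse_seq :: "(nat \<Rightarrow> nat) \<Rightarrow> (nat \<Rightarrow> nat) \<Rightarrow> nat \<Rightarrow> nat" where
  "sparse_seq f h k = rec_nat 0 (\<lambda>y r. r + f (LEAST b. y + 2 < h b) + 1) k"

lemma sparse_seq_Suc: "sparse_seq f h (Suc k) = sparse_seq f h k + f (LEAST b. k + 2 < h b) + 1"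
  by (simp add: sparse_seq_def)

lemma strict_mono_sparse_seq: "strict_mono (sparse_seq f h)"
  by (simp add: strict_mono_Suc_iff sparse_seq_Suc)

lemma recursive_sparse_seq:
  assumes "recursive_fun f" "order_function h"
  shows "recursive_fun (sparse_seq f h)"
proof -
  have f: "computable_in {} f" and h: "computable_in {} h" and unbounded: "\<forall>k. \<exists>n. k < h n"
    using assms by (auto simp: order_function_def recursive_fun_def)
  have "rec_in {} 1 (\<lambda>xs. rec_nat 0 (\<lambda>y r. r + f (LEAST b. y + 2 < h b) + 1) (xs!0))"
    by (rule rec_in_rec_nat) (intro rec_intros rec_in_computable[OF f] rec_in_computable[OF h]
        | simp only: drop_drop | use unbounded in blast)+
  then show ?thesis
    unfolding recursive_fun_def computable_in_iff sparse_seq_def .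
qed

lemma card_le_Suc_if_subset_range:
  assumes a: "strict_mono (a :: nat \<Rightarrow> nat)" and A: "finite A" "A \<subseteq> range a" "Max A = a k"
  shows "card A \<le> Suc k"
proof -
  have "A \<subseteq> a ` {..k}"
  proof
    fix y
    assume y: "y \<in> A"
    with A obtain j where "y = a j"
      by blast
    moreover have "y \<le> a k"
      using y A by (metis Max_ge)
    ultimately show "y \<in> a ` {..k}"
      using strict_mono_less_eq[OF a] by auto
  qed
  then show ?thesis
    by (metis card_atMost card_image_le card_mono finite_atMost finite_imageI le_trans)
qed

lemma endemic_range_sparse_seq_bounded:
  assumes D: "numbering D" and h: "order_function h" and "mono f"
    and dom: "\<forall>n\<ge>N. running_max (\<lambda>e. canon (D e)) n \<le> f n"
    and e: "h e \<le> card (D e)" "D e \<subseteq> range (sparse_seq f h)"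
  shows "e < N"
proof (rule ccontr)
  let ?a = "sparse_seq f h"
  assume "\<not> e < N"
  have fin: "finite (D e)"
    using D unfolding numbering_def by blast
  have "2 \<le> h e"
    using h monoD[of h 0 e] by (auto simp: order_function_def)
  with e have two: "2 \<le> card (D e)"
    by simp
  then obtain k where k: "Max (D e) = ?a k"
    using e fin Max_in by (metis card.empty not_numeral_le_zero subsetD rangeE)
  then have "card (D e) \<le> Suc k"
    using card_le_Suc_if_subset_range[OF strict_mono_sparse_seq fin e(2)] by blast
  with two obtain k' where k': "k = Suc k'"
    by (cases k) auto
  have "h e < h (LEAST b. k' + 2 < h b)"
    using LeastI_ex[of "\<lambda>b. k' + 2 < h b"] h e \<open>card (D e) \<le> Suc k\<close> k'
    by (simp add: order_function_def)
  then have "e \<le> (LEAST b. k' + 2 < h b)"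
    using h by (metis monoD not_le order_function_def order_less_imp_le)
  have "Max (D e) < 2 ^ Max (D e)"
    by simp
  also have "\<dots> \<le> canon (D e)"
    using fin two by (intro power2_le_canon Max_in) auto
  also have "\<dots> \<le> running_max (\<lambda>e. canon (D e)) e"
    by (rule le_running_max[where f="\<lambda>e. canon (D e)"]) simp
  also have "\<dots> \<le> f e"
    using dom \<open>\<not> e < N\<close> by simp
  also have "\<dots> \<le> f (LEAST b. k' + 2 < h b)"
    using \<open>mono f\<close> \<open>e \<le> _\<close> by (rule monoD)
  also have "\<dots> < ?a (Suc k')"
    by (simp add: sparse_seq_Suc)
  finally show False
    using k k' by simp
qed

lemma not_endemic_if_dominated:
  assumes D: "numbering D" and h: "order_function h" and f: "recursive_fun f"
    and dom: "dominates f (running_max (\<lambda>e. canon (D e)))"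
  shows "\<exists>R. infinite R \<and> recursive_set R \<and> \<not> endemic h D R"
proof -
  obtain N where N: "\<forall>n\<ge>N. running_max (\<lambda>e. canon (D e)) n \<le> f n"
    using dom by (auto simp: dominates_def)
  then have "\<forall>n\<ge>N. running_max (\<lambda>e. canon (D e)) n \<le> running_max f n"
    using le_running_max[of _ _ f] order_trans by blast
  moreover have "recursive_fun (running_max f)"
    using f computable_running_max by (simp add: recursive_fun_def)
  ultimately have "{e. h e \<le> card (D e) \<and> D e \<subseteq> range (sparse_seq (running_max f) h)} \<subseteq> {..<N}"
    using endemic_range_sparse_seq_bounded[OF D h mono_running_max] by blast
  then have "\<not> endemic h D (range (sparse_seq (running_max f) h))"
    unfolding endemic_def by (meson finite_lessThan finite_subset)
  moreover have "recursive_set (range (sparse_seq (running_max f) h))"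
    using computable_set_range[OF strict_mono_sparse_seq] recursive_sparse_seq[OF _ h]
      \<open>recursive_fun (running_max f)\<close>
    by (simp add: recursive_set_def recursive_fun_def)
  ultimately show ?thesis
    using infinite_range_strict_mono[OF strict_mono_sparse_seq] by blast
qed


theorem hyperimmune_if_pandemic_numbering:
  assumes D: "numbering D" "computes_numbering X D" "pandemic D"
  shows "\<exists>H. computable_set_in X H \<and> hyperimmune H"
proof -
  obtain h where h: "order_function h" and endemic: "\<And>R. infinite R \<Longrightarrow> recursive_set R \<Longrightarrow> endemic h D R"
    using D(3) unfolding pandemic_def by blast
  let ?q = "running_max (\<lambda>e. canon (D e))"
  let ?s = "\<lambda>n. ?q n + n"
  have escapes: "\<not> dominates f ?q" if "recursive_fun f" for f
    using not_endemic_if_dominated[OF D(1) h that] endemic by blast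
  have s: "strict_mono ?s"
    using mono_running_max by (auto simp: strict_mono_def mono_def add_le_less_mono)
  have "computable_in X ?q"
    using D(2) by (intro computable_running_max) (simp add: computes_numbering_def)
  then have "computable_in X ?s"
    unfolding computable_in_iff by (intro rec_in_add rec_in.proj) auto
  then have "computable_set_in X (range ?s)"
    by (rule computable_set_range[OF s])
  moreover have "\<not> dominates f (enumerate (range ?s))" if "recursive_fun f" for f
  proof
    assume "dominates f (enumerate (range ?s))"
    then have "dominates f ?q"
      unfolding dominates_def enumerate_range_strict_mono[OF s] using add_leE by meson
    with escapes[OF that] show False ..
  qed
  ultimately show ?thesis
    using infinite_range_strict_mono[OF s] unfolding hyperimmune_def by blast
qed

theorem mainTheorem14:
  fixes X :: "nat set"
  shows "(\<exists>D. numbering D \<and> computes_numbering X D \<and> pandemic D) \<longleftrightarrow>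
         (\<exists>H. computable_set_in X H \<and> hyperimmune H)"
  using hyperimmune_if_pandemic_numbering pandemic_numbering_if_hyperimmune by blast

end
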